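(* The symmetrized bidisc $\mathbb{G}=\{(z_1+z_2,z_1z_2):z_1,z_2\in\mathbb{D}\}$ is biholomorphic to the domain $\mathcal{D}_1=\{(z_1,z_2)\in\mathbb{C}^2: 1+|z_1|^2-|z_2|^2>|1+z_1^2-z_2^2|,\ \mathrm{Im}(z_1(1+\overline{z_2}))>0\}$.
   Context: $\mathbb{D}$ denotes the open unit disc in $\mathbb{C}$. *)

theory Defs
  imports "HOL-Analysis.Analysis"
begin

definition cscale2 :: "complex \<Rightarrow> complex \<times> complex \<Rightarrow> complex \<times> complex" where
  "cscale2 c w = (c * fst w, c * snd w)"

definition holomorphic2_on :: "(complex \<times> complex \<Rightarrow> complex \<times> complex) \<Rightarrow> (complex \<times> complex) set \<Rightarrow> bool" where
  "holomorphic2_on F U \<longleftrightarrow>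
     (\<forall>z\<in>U. \<exists>L. (F has_derivative L) (at z) \<and> (\<forall>c w. L (cscale2 c w) = cscale2 c (L w)))"

definition biholomorphic2 :: "(complex \<times> complex) set \<Rightarrow> (complex \<times> complex) set \<Rightarrow> bool" where
  "biholomorphic2 A B \<longleftrightarrow>
     (\<exists>F G. holomorphic2_on F A \<and> holomorphic2_on G B \<and> F ` A = B \<and> G ` B = A \<and>
            (\<forall>z\<in>A. G (F z) = z) \<and> (\<forall>w\<in>B. F (G w) = w))"

definition symmetrized_bidisc :: "(complex \<times> complex) set" where
  "symmetrized_bidisc = {(z1 + z2, z1 * z2) | z1 z2. norm z1 < 1 \<and> norm z2 < 1}"

definition domain_D1 :: "(complex \<times> complex) set" where
  "domain_D1 = {(z1, z2). 1 + (norm z1)^2 - (norm z2)^2 > norm (1 + z1^2 - z2^2)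
                     \<and> Im (z1 * (1 + cnj z2)) > 0}"

end

theory Submission
  imports Defs
begin

text \<open>Let \<open>F(s, p) = (\<i>(1 + p)/(1 - p), \<i>s/(1 - p))\<close>, a rational map with rational inverse
  \<open>(a, b) \<mapsto> (2b/(a + \<i>), (a - \<i>)/(a + \<i>))\<close>. Every \<open>(s, p)\<close> is \<open>(z\<^sub>1 + z\<^sub>2, z\<^sub>1z\<^sub>2)\<close> for some
  \<open>z\<^sub>1, z\<^sub>2\<close>, and multiplying the two inequalities defining \<open>\<D>\<^sub>1\<close> at \<open>F(z\<^sub>1 + z\<^sub>2, z\<^sub>1z\<^sub>2)\<close> by
  \<open>|1 - z\<^sub>1z\<^sub>2|\<^sup>2\<close> turns them into \<open>(1 - |z\<^sub>1|\<^sup>2)(1 - |z\<^sub>2|\<^sup>2) > 0\<close> and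
  \<open>1 - |z\<^sub>1|\<^sup>2|z\<^sub>2|\<^sup>2 - Im z\<^sub>1 (1 - |z\<^sub>2|\<^sup>2) - Im z\<^sub>2 (1 - |z\<^sub>1|\<^sup>2) > 0\<close>, which together say exactly
  that \<open>|z\<^sub>1|, |z\<^sub>2| < 1\<close>. Hence \<open>F\<close> maps \<open>\<bbbG>\<close> onto \<open>\<D>\<^sub>1\<close>, and holomorphy of \<open>F\<close> and its inverse
  is a closure property of maps with complex-linear derivative.\<close>

definition complex_differentiable2 :: "(complex \<times> complex \<Rightarrow> complex) \<Rightarrow> complex \<times> complex \<Rightarrow> bool" where
  "complex_differentiable2 f z \<longleftrightarrow>
     (\<exists>c1 c2. (f has_derivative (\<lambda>h. c1 * fst h + c2 * snd h)) (at z))"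

lemma complex_differentiable2_const: "complex_differentiable2 (\<lambda>x. c) z"
  unfolding complex_differentiable2_def
  by (rule exI[of _ 0], rule exI[of _ 0]) (simp add: has_derivative_const)

lemma complex_differentiable2_fst: "complex_differentiable2 fst z"
  unfolding complex_differentiable2_def
  by (rule exI[of _ 1], rule exI[of _ 0]) (simp add: has_derivative_fst[OF has_derivative_ident])

lemma complex_differentiable2_snd: "complex_differentiable2 snd z"
  unfolding complex_differentiable2_def
  by (rule exI[of _ 0], rule exI[of _ 1]) (simp add: has_derivative_snd[OF has_derivative_ident])

lemma complex_differentiable2_add:
  assumes "complex_differentiable2 f z" "complex_differentiable2 g z"
  shows "complex_differentiable2 (\<lambda>x. f x + g x) z"
proof -
  obtain a1 a2 b1 b2 where df:
    "(f has_derivative (\<lambda>h. a1 * fst h + a2 * snd h)) (at z)"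
    and dg: "(g has_derivative (\<lambda>h. b1 * fst h + b2 * snd h)) (at z)"
    using assms unfolding complex_differentiable2_def by blast
  have "((\<lambda>x. f x + g x) has_derivative (\<lambda>h. (a1 + b1) * fst h + (a2 + b2) * snd h)) (at z)"
    using has_derivative_add[OF df dg] by (rule has_derivative_eq_rhs) (simp add: fun_eq_iff algebra_simps)
  then show ?thesis
    unfolding complex_differentiable2_def by blast
qed

lemma complex_differentiable2_diff:
  assumes "complex_differentiable2 f z" "complex_differentiable2 g z"
  shows "complex_differentiable2 (\<lambda>x. f x - g x) z"
proof -
  obtain a1 a2 b1 b2 where df:
    "(f has_derivative (\<lambda>h. a1 * fst h + a2 * snd h)) (at z)"
    and dg: "(g has_derivative (\<lambda>h. b1 * fst h + b2 * snd h)) (at z)"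
    using assms unfolding complex_differentiable2_def by blast
  have "((\<lambda>x. f x - g x) has_derivative (\<lambda>h. (a1 - b1) * fst h + (a2 - b2) * snd h)) (at z)"
    using has_derivative_diff[OF df dg] by (rule has_derivative_eq_rhs) (simp add: fun_eq_iff algebra_simps)
  then show ?thesis
    unfolding complex_differentiable2_def by blast
qed

lemma complex_differentiable2_mult:
  assumes "complex_differentiable2 f z" "complex_differentiable2 g z"
  shows "complex_differentiable2 (\<lambda>x. f x * g x) z"
proof -
  obtain a1 a2 b1 b2 where df:
    "(f has_derivative (\<lambda>h. a1 * fst h + a2 * snd h)) (at z)"
    and dg: "(g has_derivative (\<lambda>h. b1 * fst h + b2 * snd h)) (at z)"
    using assms unfolding complex_differentiable2_def by blast
  have "((\<lambda>x. f x * g x) has_derivative (\<lambda>h. (f z * b1 + a1 * g z) * fst h + (f z * b2 + a2 * g z) * snd h)) (at z)"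
    using has_derivative_mult[OF df dg] by (rule has_derivative_eq_rhs) (simp add: fun_eq_iff algebra_simps)
  then show ?thesis
    unfolding complex_differentiable2_def by blast
qed

lemma complex_differentiable2_inverse:
  assumes "complex_differentiable2 f z" "f z \<noteq> 0"
  shows "complex_differentiable2 (\<lambda>x. inverse (f x)) z"
proof -
  obtain a1 a2 where df: "(f has_derivative (\<lambda>h. a1 * fst h + a2 * snd h)) (at z)"
    using assms unfolding complex_differentiable2_def by blast
  have "((\<lambda>x. inverse (f x)) has_derivative (\<lambda>h. (- a1 / (f z)^2) * fst h + (- a2 / (f z)^2) * snd h)) (at z)"
    using Deriv.has_derivative_inverse[OF \<open>f z \<noteq> 0\<close> df] by (rule has_derivative_eq_rhs) (simp add: fun_eq_iff power2_eq_square divide_inverse algebra_simps)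
  then show ?thesis
    unfolding complex_differentiable2_def by blast
qed

lemma complex_differentiable2_divide:
  assumes "complex_differentiable2 f z" "complex_differentiable2 g z" "g z \<noteq> 0"
  shows "complex_differentiable2 (\<lambda>x. f x / g x) z"
  using complex_differentiable2_mult[OF assms(1) complex_differentiable2_inverse[OF assms(2,3)]]
  by (simp add: divide_inverse)

lemmas complex_differentiable2_intros =
  complex_differentiable2_const complex_differentiable2_fst complex_differentiable2_snd
  complex_differentiable2_add complex_differentiable2_diff complex_differentiable2_mult
  complex_differentiable2_divide

lemma holomorphic2_on_Pair:
  assumes "\<And>z. z \<in> U \<Longrightarrow> complex_differentiable2 f z \<and> complex_differentiable2 g z"
  shows "holomorphic2_on (\<lambda>x. (f x, g x)) U"
  unfolding holomorphic2_on_def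
proof
  fix z assume "z \<in> U"
  then obtain a1 a2 b1 b2 where
    "(f has_derivative (\<lambda>h. a1 * fst h + a2 * snd h)) (at z)"
    "(g has_derivative (\<lambda>h. b1 * fst h + b2 * snd h)) (at z)"
    using assms unfolding complex_differentiable2_def by blast
  from has_derivative_Pair[OF this]
  show "\<exists>L. ((\<lambda>x. (f x, g x)) has_derivative L) (at z) \<and> (\<forall>c w. L (cscale2 c w) = cscale2 c (L w))"
    by (auto simp: cscale2_def algebra_simps)
qed

lemma biholomorphic2I:
  assumes "holomorphic2_on F A" "holomorphic2_on G B"
    and "\<And>z. z \<in> A \<Longrightarrow> F z \<in> B" "\<And>w. w \<in> B \<Longrightarrow> G w \<in> A"
    and "\<And>z. z \<in> A \<Longrightarrow> G (F z) = z" "\<And>w. w \<in> B \<Longrightarrow> F (G w) = w"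
  shows "biholomorphic2 A B"
  unfolding biholomorphic2_def
proof (intro exI conjI ballI)
  show "F ` A = B" using assms(3,4,6) by (force simp: image_iff)
  show "G ` B = A" using assms(3,4,5) by (force simp: image_iff)
qed (use assms in auto)

lemma sum_product_decomposition: "\<exists>z1 z2. s = z1 + z2 \<and> p = z1 * (z2::complex)"
proof (intro exI conjI)
  let ?r = "csqrt (s^2 - 4 * p)"
  show "s = (s + ?r) / 2 + (s - ?r) / 2" by (simp add: field_simps)
  have "(s + ?r) / 2 * ((s - ?r) / 2) = (s^2 - ?r^2) / 4" by (simp add: field_simps power2_eq_square)
  then show "p = (s + ?r) / 2 * ((s - ?r) / 2)" by simp
qed

lemma two_Im_le_one_plus_norm_square: "2 * Im z \<le> 1 + (cmod z)^2"
proof -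
  have "2 * cmod z \<le> 1 + (cmod z)^2"
    using zero_le_power2[of "cmod z - 1"] by (simp add: power2_eq_square algebra_simps)
  then show ?thesis using abs_Im_le_cmod[of z] by linarith
qed

lemma two_Im_less_one_plus_norm_square:
  assumes "cmod z < 1"
  shows "2 * Im z < 1 + (cmod z)^2"
proof -
  have "0 < (1 - cmod z)^2" using assms by simp
  then have "2 * cmod z < 1 + (cmod z)^2" by (simp add: power2_eq_square algebra_simps)
  then show ?thesis using abs_Im_le_cmod[of z] by linarith
qed

lemma bidisc_conditions_iff:
  fixes z1 z2 :: complex
  shows "(0 < (1 - (cmod z1)^2) * (1 - (cmod z2)^2) \<and>
          0 < 1 - (cmod z1)^2 * (cmod z2)^2 - Im z1 * (1 - (cmod z2)^2) - Im z2 * (1 - (cmod z1)^2))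
    \<longleftrightarrow> cmod z1 < 1 \<and> cmod z2 < 1"
    (is "?P \<and> 0 < ?Q \<longleftrightarrow> _")
proof -
  txt \<open>The product is positive iff both moduli are below 1 or both exceed 1; in the latter
    case the rewriting Q together with \<open>2 Im z \<le> 1 + |z|\<^sup>2\<close> makes the second quantity nonpositive.\<close>
  have Q: "2 * ?Q = (1 - (cmod z2)^2) * (1 + (cmod z1)^2 - 2 * Im z1)
                  + (1 - (cmod z1)^2) * (1 + (cmod z2)^2 - 2 * Im z2)"
    by (simp add: algebra_simps)
  have lt_iff: "cmod z < 1 \<longleftrightarrow> 0 < 1 - (cmod z)^2" for z :: complex
    by (simp add: power_less_one_iff abs_less_iff)
  show ?thesis
  proof
    assume "?P \<and> 0 < ?Q"
    show "cmod z1 < 1 \<and> cmod z2 < 1"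
    proof (rule ccontr)
      assume "\<not> (cmod z1 < 1 \<and> cmod z2 < 1)"
      with \<open>?P \<and> 0 < ?Q\<close> have "1 - (cmod z1)^2 < 0" "1 - (cmod z2)^2 < 0"
        unfolding lt_iff by (auto simp: zero_less_mult_iff)
      with two_Im_le_one_plus_norm_square[of z1] two_Im_le_one_plus_norm_square[of z2]
      have "2 * ?Q \<le> 0"
        unfolding Q by (intro add_nonpos_nonpos mult_nonpos_nonneg) auto
      with \<open>?P \<and> 0 < ?Q\<close> show False by auto
    qed
  next
    assume "cmod z1 < 1 \<and> cmod z2 < 1"
    with two_Im_less_one_plus_norm_square[of z1] two_Im_less_one_plus_norm_square[of z2] have "0 < 2 * ?Q"
      unfolding Q lt_iff by (intro add_pos_pos mult_pos_pos) auto
    with \<open>cmod z1 < 1 \<and> cmod z2 < 1\<close> show "?P \<and> 0 < ?Q"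
      unfolding lt_iff by simp
  qed
qed

text \<open>The first coordinate is the Cayley map \<open>p \<mapsto> \<i>(1 + p)/(1 - p)\<close> of the disc onto the upper half-plane.\<close>

definition sym_to_D1 :: "complex \<times> complex \<Rightarrow> complex \<times> complex" where
  "sym_to_D1 x = (\<i> * (1 + snd x) / (1 - snd x), \<i> * fst x / (1 - snd x))"

definition D1_to_sym :: "complex \<times> complex \<Rightarrow> complex \<times> complex" where
  "D1_to_sym w = (2 * snd w / (fst w + \<i>), (fst w - \<i>) / (fst w + \<i>))"

lemma D1_to_sym_sym_to_D1: "snd x \<noteq> 1 \<Longrightarrow> D1_to_sym (sym_to_D1 x) = x"
  by (cases x) (simp add: D1_to_sym_def sym_to_D1_def field_simps)

lemma sym_to_D1_D1_to_sym:
  assumes "fst w + \<i> \<noteq> 0"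
  shows "sym_to_D1 (D1_to_sym w) = w"
proof -
  obtain a b where w: "w = (a, b)" by fastforce
  have "1 + (a - \<i>) / (a + \<i>) = 2 * a / (a + \<i>)"
    and "1 - (a - \<i>) / (a + \<i>) = 2 * \<i> / (a + \<i>)"
    using assms by (simp_all add: w field_simps)
  then show ?thesis using assms by (simp add: w D1_to_sym_def sym_to_D1_def)
qed

lemma sym_to_D1_modulus_identity:
  fixes z1 z2 :: complex
  assumes "z1 * z2 \<noteq> 1" and ab: "sym_to_D1 (z1 + z2, z1 * z2) = (a, b)"
  shows "(cmod (1 - z1 * z2))^2 * (1 + (cmod a)^2 - (cmod b)^2 - cmod (1 + a^2 - b^2))
    = 2 * ((1 - (cmod z1)^2) * (1 - (cmod z2)^2))"
proof -
  define d where "d = 1 - z1 * z2"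
  have "d \<noteq> 0" using assms(1) by (simp add: d_def)
  have a: "a = \<i> * (1 + z1 * z2) / d" and b: "b = \<i> * (z1 + z2) / d"
    using ab by (simp_all add: sym_to_D1_def d_def)
  have "a^2 = - ((1 + z1 * z2)^2 / d^2)" and "b^2 = - ((z1 + z2)^2 / d^2)"
    by (simp_all add: a b power_divide power_mult_distrib)
  then have "1 + a^2 - b^2 = (d^2 - (1 + z1 * z2)^2 + (z1 + z2)^2) / d^2"
    using \<open>d \<noteq> 0\<close> by (simp add: field_simps)
  also have "d^2 - (1 + z1 * z2)^2 + (z1 + z2)^2 = (z1 - z2)^2"
    unfolding d_def by algebra
  finally have "cmod (1 + a^2 - b^2) = (cmod (z1 - z2))^2 / (cmod d)^2"
    by (simp add: norm_divide norm_power)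
  moreover have "(cmod a)^2 = (cmod (1 + z1 * z2))^2 / (cmod d)^2"
    and "(cmod b)^2 = (cmod (z1 + z2))^2 / (cmod d)^2"
    by (simp_all add: a b norm_divide norm_mult power_divide)
  ultimately have "(cmod d)^2 * (1 + (cmod a)^2 - (cmod b)^2 - cmod (1 + a^2 - b^2))
      = (cmod d)^2 + (cmod (1 + z1 * z2))^2 - (cmod (z1 + z2))^2 - (cmod (z1 - z2))^2"
    using \<open>d \<noteq> 0\<close> by (simp add: field_simps)
  also have "\<dots> = 2 * ((1 - (cmod z1)^2) * (1 - (cmod z2)^2))"
    unfolding d_def cmod_power2 by (simp add: algebra_simps power2_eq_square)
  finally show ?thesis by (simp add: d_def)
qed

lemma sym_to_D1_Im_identity:
  fixes z1 z2 :: complex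
  assumes "z1 * z2 \<noteq> 1" and ab: "sym_to_D1 (z1 + z2, z1 * z2) = (a, b)"
  shows "(cmod (1 - z1 * z2))^2 * Im (a * (1 + cnj b))
    = 1 - (cmod z1)^2 * (cmod z2)^2 - Im z1 * (1 - (cmod z2)^2) - Im z2 * (1 - (cmod z1)^2)"
proof -
  define d where "d = 1 - z1 * z2"
  have "d \<noteq> 0" using assms(1) by (simp add: d_def)
  have a: "a = \<i> * (1 + z1 * z2) / d" and b: "b = \<i> * (z1 + z2) / d"
    using ab by (simp_all add: sym_to_D1_def d_def)
  have "a * (1 + cnj b) * (d * cnj d) = \<i> * (1 + z1 * z2) * (cnj d - \<i> * cnj (z1 + z2))"
    using \<open>d \<noteq> 0\<close> by (simp add: a b field_simps)
  then have "a * (1 + cnj b) * of_real ((cmod d)^2) = \<i> * (1 + z1 * z2) * (cnj d - \<i> * cnj (z1 + z2))"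
    by (simp only: complex_norm_square)
  from arg_cong[where f = Im, OF this]
  have "(cmod d)^2 * Im (a * (1 + cnj b)) = Im (\<i> * (1 + z1 * z2) * (cnj d - \<i> * cnj (z1 + z2)))"
    by (simp add: mult.commute)
  also have "\<dots> = 1 - (cmod z1)^2 * (cmod z2)^2 - Im z1 * (1 - (cmod z2)^2) - Im z2 * (1 - (cmod z1)^2)"
    unfolding d_def cmod_power2 by (simp add: algebra_simps power2_eq_square)
  finally show ?thesis by (simp add: d_def)
qed

lemma sym_to_D1_in_D1_iff:
  fixes z1 z2 :: complex
  assumes "z1 * z2 \<noteq> 1"
  shows "sym_to_D1 (z1 + z2, z1 * z2) \<in> domain_D1 \<longleftrightarrow> cmod z1 < 1 \<and> cmod z2 < 1"
proof -
  obtain a b where ab: "sym_to_D1 (z1 + z2, z1 * z2) = (a, b)" by fastforce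
  have "0 < (cmod (1 - z1 * z2))^2" using assms by simp
  then have "(a, b) \<in> domain_D1 \<longleftrightarrow>
      0 < (cmod (1 - z1 * z2))^2 * (1 + (cmod a)^2 - (cmod b)^2 - cmod (1 + a^2 - b^2)) \<and>
      0 < (cmod (1 - z1 * z2))^2 * Im (a * (1 + cnj b))"
    by (simp add: domain_D1_def zero_less_mult_iff)
  also have "\<dots> \<longleftrightarrow> 0 < (1 - (cmod z1)^2) * (1 - (cmod z2)^2) \<and>
      0 < 1 - (cmod z1)^2 * (cmod z2)^2 - Im z1 * (1 - (cmod z2)^2) - Im z2 * (1 - (cmod z1)^2)"
    unfolding sym_to_D1_modulus_identity[OF assms ab] sym_to_D1_Im_identity[OF assms ab]
    by linarith
  also have "\<dots> \<longleftrightarrow> cmod z1 < 1 \<and> cmod z2 < 1"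
    by (rule bidisc_conditions_iff)
  finally show ?thesis by (simp add: ab)
qed

lemma symmetrized_bidisc_snd_ne_1:
  assumes "x \<in> symmetrized_bidisc"
  shows "snd x \<noteq> 1"
proof -
  obtain z1 z2 where "x = (z1 + z2, z1 * z2)" "cmod z1 < 1" "cmod z2 < 1"
    using assms by (auto simp: symmetrized_bidisc_def)
  moreover from this have "cmod (z1 * z2) < 1"
    using mult_strict_mono[of "cmod z1" 1 "cmod z2" 1] by (simp add: norm_mult)
  ultimately show ?thesis by auto
qed

lemma domain_D1_fst_ne:
  assumes "w \<in> domain_D1"
  shows "fst w + \<i> \<noteq> 0"
proof
  obtain a b where w: "w = (a, b)" by fastforce
  assume "fst w + \<i> = 0"
  then have "a = - \<i>" by (simp add: w add_eq_0_iff2)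
  with assms have "2 - (cmod b)^2 > (cmod b)^2" and "- 1 - Re b > 0"
    by (simp_all add: w domain_D1_def norm_power)
  then have "cmod b < 1" "Re b < -1"
    by (auto simp: power_less_one_iff abs_less_iff)
  with abs_Re_le_cmod[of b] show False by linarith
qed

lemma sym_to_D1_in_D1:
  assumes "x \<in> symmetrized_bidisc"
  shows "sym_to_D1 x \<in> domain_D1"
  using assms symmetrized_bidisc_snd_ne_1[OF assms] sym_to_D1_in_D1_iff
  by (auto simp: symmetrized_bidisc_def)

lemma D1_to_sym_in_symmetrized_bidisc:
  assumes "w \<in> domain_D1"
  shows "D1_to_sym w \<in> symmetrized_bidisc"
proof -
  obtain s p where sp: "D1_to_sym w = (s, p)" by fastforce
  have "p \<noteq> 1"
  proof
    assume "p = 1"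
    with sp domain_D1_fst_ne[OF assms] show False
      by (simp add: D1_to_sym_def)
  qed
  obtain z1 z2 where z: "s = z1 + z2" "p = z1 * z2"
    using sum_product_decomposition by blast
  have "sym_to_D1 (z1 + z2, z1 * z2) = w"
    using sym_to_D1_D1_to_sym[OF domain_D1_fst_ne[OF assms]] by (simp add: sp z)
  with assms \<open>p \<noteq> 1\<close> have "cmod z1 < 1 \<and> cmod z2 < 1"
    using sym_to_D1_in_D1_iff z(2) by auto
  then show ?thesis by (auto simp: sp z symmetrized_bidisc_def)
qed

lemma holomorphic2_on_sym_to_D1: "holomorphic2_on sym_to_D1 symmetrized_bidisc"
  unfolding sym_to_D1_def[abs_def]
  by (rule holomorphic2_on_Pair)
    (auto dest: symmetrized_bidisc_snd_ne_1 intro!: complex_differentiable2_intros)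

lemma holomorphic2_on_D1_to_sym: "holomorphic2_on D1_to_sym domain_D1"
  unfolding D1_to_sym_def[abs_def]
  by (rule holomorphic2_on_Pair)
    (auto dest: domain_D1_fst_ne intro!: complex_differentiable2_intros)

theorem theorem3p2:
  shows "biholomorphic2 symmetrized_bidisc domain_D1"
  by (rule biholomorphic2I[OF holomorphic2_on_sym_to_D1 holomorphic2_on_D1_to_sym
        sym_to_D1_in_D1 D1_to_sym_in_symmetrized_bidisc])
    (auto intro: D1_to_sym_sym_to_D1 sym_to_D1_D1_to_sym
      dest: symmetrized_bidisc_snd_ne_1 domain_D1_fst_ne)

end
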